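(* Let $\nu,k$ be integers with $2\nu-1\ge k\ge\nu-1\ge1$. Then $N(2\nu,k)=2$ if $k\equiv2\nu+1\pmod3$, and $N(2\nu,k)=0$ otherwise.
   Context: For $n>k\ge1$, $N(n,k)$ is the nullity of the $n\times n$ skew-symmetric Toeplitz matrix $A(n,k)$ whose first $k$ superdiagonals have all entries $1$ and whose remaining superdiagonals have all entries $0$. *)

theory Defs
  imports "Jordan_Normal_Form.Matrix_Kernel"
begin

definition skewA :: "nat \<Rightarrow> nat \<Rightarrow> real mat" where
  "skewA n k = mat n n (\<lambda>(i,j).
      if i < j \<and> j - i \<le> k then 1
      else if j < i \<and> i - j \<le> k then -1
      else 0)"

definition nullityN :: "nat \<Rightarrow> nat \<Rightarrow> nat" where
  "nullityN n k = kernel_dim (skewA n k)"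

end

theory Submission
  imports Defs
begin

(* Write S j for the j-th prefix sum of x. Row i of A(n,k) x = 0 says
   S (min (i+k+1) n) + S (i-k) = S i + S (i+1).  For n even and k < n <= 2k+2 put
   gap = n-k-1.  These relations force S to run through the 3-periodic pattern
   0, s, t-s (s = S 1, t = S n) on [0, gap], to alternate between two values on
   [gap, k+1], and to satisfy S (i+k+1) = S i + S (i+1) beyond, so S is determined
   by (s, t).  The first and last rows add the constraints S gap = s and
   S (gap-1) = 0, which hold for all s, t when gap = 1 (mod 3) and force s = t = 0
   otherwise.  Hence the nullity is 2 or 0; for n = 2 nu, gap = 1 (mod 3) exactly
   when k = 2 nu + 1 (mod 3). *)

lemma kernel_dim_eq_0:
  fixes A :: "'a :: field mat"
  assumes A: "A \<in> carrier_mat nr nc" and trivial: "mat_kernel A \<subseteq> {0\<^sub>v nc}"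
  shows "kernel_dim A = 0"
proof -
  interpret K: kernel nr nc A by unfold_locales (rule A)
  have "K.span {0\<^sub>v nc} = mat_kernel A"
    using K.Ker.span_is_subset2[of "{0\<^sub>v nc}"] K.Ker.span_zero trivial by auto
  then show ?thesis using K.Ker.dim0I by simp
qed

lemma kernel_dim_eq_2:
  fixes A :: "'a :: field mat"
  assumes A: "A \<in> carrier_mat nr nc"
    and u: "u \<in> mat_kernel A" and v: "v \<in> mat_kernel A"
    and indep: "\<And>c d. c \<cdot>\<^sub>v u + d \<cdot>\<^sub>v v = 0\<^sub>v nc \<Longrightarrow> c = 0 \<and> d = 0"
    and spans: "\<And>x. x \<in> mat_kernel A \<Longrightarrow> \<exists>c d. x = c \<cdot>\<^sub>v u + d \<cdot>\<^sub>v v"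
  shows "kernel_dim A = 2"
proof -
  interpret K: kernel nr nc A by unfold_locales (rule A)
  have uv: "{u, v} \<subseteq> mat_kernel A" using u v by simp
  have "u \<noteq> v"
  proof
    assume "u = v"
    then have "1 \<cdot>\<^sub>v u + (-1) \<cdot>\<^sub>v v = (1 + -1) \<cdot>\<^sub>v v"
      by (simp only: add_smult_distrib_vec)
    also have "\<dots> = 0\<^sub>v nc" using v mat_kernel_carrier[OF A] by auto
    finally show False using indep by fastforce
  qed
  then have lincomb: "K.lincomb c {u, v} = c u \<cdot>\<^sub>v u + c v \<cdot>\<^sub>v v" for c
    using u v K.Ker.lincomb_insert2[of "{v}" c u] K.Ker.lincomb_insert2[of "{}" c v]
    by (auto simp: insert_commute)
  have indpt: "K.lin_indpt {u, v}"
  proof (rule K.Ker.finite_lin_indpt2)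
    fix c assume "K.lincomb c {u, v} = 0\<^sub>v nc"
    then show "\<forall>w\<in>{u, v}. c w = 0" using indep lincomb by auto
  qed (use uv in auto)
  have "K.span {u, v} = mat_kernel A"
  proof
    show "K.span {u, v} \<subseteq> mat_kernel A" by (rule K.Ker.span_is_subset2[OF uv])
    show "mat_kernel A \<subseteq> K.span {u, v}"
    proof
      fix x assume "x \<in> mat_kernel A"
      then obtain a b where x: "x = a \<cdot>\<^sub>v u + b \<cdot>\<^sub>v v" using spans by blast
      define c where "c w = (if w = u then a else b)" for w
      have "x = K.lincomb c {u, v}" using x lincomb \<open>u \<noteq> v\<close> by (simp add: c_def)
      then show "x \<in> K.span {u, v}"
        unfolding K.Ker.finite_span[OF _ uv, simplified] by auto
    qed
  qed
  then have "K.basis {u, v}" unfolding K.Ker.basis_def using indpt uv by auto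
  then have "K.dim = card {u, v}" by (intro K.Ker.dim_basis) simp_all
  then show ?thesis using \<open>u \<noteq> v\<close> by simp
qed

definition prefix_sum :: "'a :: comm_monoid_add vec \<Rightarrow> nat \<Rightarrow> 'a" where
  "prefix_sum x j = (\<Sum>l<j. x $ l)"

definition difference_vec :: "nat \<Rightarrow> (nat \<Rightarrow> 'a :: ab_group_add) \<Rightarrow> 'a vec" where
  "difference_vec n S = vec n (\<lambda>l. S (Suc l) - S l)"

lemma prefix_sum_0 [simp]: "prefix_sum x 0 = 0"
  unfolding prefix_sum_def by simp

lemma prefix_sum_Suc [simp]: "prefix_sum x (Suc j) = prefix_sum x j + x $ j"
  unfolding prefix_sum_def by simp

lemma sum_atLeastLessThan_prefix_sum:
  fixes x :: "'a :: ab_group_add vec"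
  assumes "p \<le> q"
  shows "(\<Sum>l = p..<q. x $ l) = prefix_sum x q - prefix_sum x p"
  using sum.atLeastLessThan_concat[of 0 p q "\<lambda>l. x $ l"] assms
  unfolding prefix_sum_def by (simp add: atLeast0LessThan eq_diff_eq add.commute)

lemma prefix_sum_zero_vec: "j \<le> n \<Longrightarrow> prefix_sum (0\<^sub>v n) j = 0"
  unfolding prefix_sum_def by simp

lemma prefix_sum_vec: "j \<le> n \<Longrightarrow> prefix_sum (vec n f) j = (\<Sum>l<j. f l)"
  unfolding prefix_sum_def by (intro sum.cong) auto

lemma prefix_sum_difference_vec:
  assumes "S 0 = 0" and "j \<le> n"
  shows "prefix_sum (difference_vec n S) j = S j"
  using assms unfolding difference_vec_def by (simp add: prefix_sum_vec sum_lessThan_telescope)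

lemma prefix_sum_lincomb:
  fixes x y :: "'a :: comm_ring vec"
  assumes "x \<in> carrier_vec n" and "y \<in> carrier_vec n" and "j \<le> n"
  shows "prefix_sum (c \<cdot>\<^sub>v x + d \<cdot>\<^sub>v y) j = c * prefix_sum x j + d * prefix_sum y j"
  using assms unfolding prefix_sum_def by (simp add: sum.distrib sum_distrib_left)

lemma vec_eq_by_prefix_sums:
  fixes x y :: "'a :: ab_group_add vec"
  assumes "x \<in> carrier_vec n" and "y \<in> carrier_vec n"
    and "\<And>j. j \<le> n \<Longrightarrow> prefix_sum x j = prefix_sum y j"
  shows "x = y"
proof (rule eq_vecI)
  fix l assume "l < dim_vec y"
  then have "l < n" using assms(2) by simp
  then show "x $ l = y $ l"
    using assms(3)[of l] assms(3)[of "Suc l"] by simp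
qed (use assms in simp)

lemma skewA_carrier: "skewA n k \<in> carrier_mat n n"
  unfolding skewA_def by simp

lemma mult_skewA_index:
  assumes x: "x \<in> carrier_vec n" and i: "i < n"
  shows "(skewA n k *\<^sub>v x) $ i =
    (prefix_sum x (min (i + k + 1) n) - prefix_sum x (i + 1)) - (prefix_sum x i - prefix_sum x (i - k))"
proof -
  have "(skewA n k *\<^sub>v x) $ i = (\<Sum>l = 0..<n. (if i < l \<and> l - i \<le> k then 1
      else if l < i \<and> i - l \<le> k then -1 else 0) * x $ l)"
    using x i unfolding skewA_def by (simp add: scalar_prod_def)
  also have "\<dots> = (\<Sum>l = 0..<n. if l \<in> {i + 1..<min (i + k + 1) n} then x $ l else 0)
      - (\<Sum>l = 0..<n. if l \<in> {i - k..<i} then x $ l else 0)"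
    unfolding sum_subtractf[symmetric] by (rule sum.cong) auto
  also have "\<dots> = (\<Sum>l = i + 1..<min (i + k + 1) n. x $ l) - (\<Sum>l = i - k..<i. x $ l)"
  proof -
    have "{0..<n} \<inter> {i + 1..<min (i + k + 1) n} = {i + 1..<min (i + k + 1) n}"
      and "{0..<n} \<inter> {i - k..<i} = {i - k..<i}"
      using i by auto
    then show ?thesis by (simp only: sum.inter_restrict[OF finite_atLeastLessThan, symmetric])
  qed
  also have "\<dots> = (prefix_sum x (min (i + k + 1) n) - prefix_sum x (i + 1))
      - (prefix_sum x i - prefix_sum x (i - k))"
    using i by (intro arg_cong2[where f = minus] sum_atLeastLessThan_prefix_sum) auto
  finally show ?thesis .
qed

lemma mat_kernel_skewA_iff:
  "x \<in> mat_kernel (skewA n k) \<longleftrightarrow> x \<in> carrier_vec n \<and>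
    (\<forall>i<n. prefix_sum x (min (i + k + 1) n) + prefix_sum x (i - k) = prefix_sum x i + prefix_sum x (i + 1))"
proof -
  have "skewA n k *\<^sub>v x = 0\<^sub>v n \<longleftrightarrow> (\<forall>i<n. (skewA n k *\<^sub>v x) $ i = 0)"
    using skewA_carrier[of n k] by (auto simp: vec_eq_iff)
  moreover have "(skewA n k *\<^sub>v x) $ i = 0 \<longleftrightarrow>
      prefix_sum x (min (i + k + 1) n) + prefix_sum x (i - k) = prefix_sum x i + prefix_sum x (i + 1)"
    if "x \<in> carrier_vec n" and "i < n" for i
    using mult_skewA_index[OF that, of k] by linarith
  ultimately show ?thesis using mat_kernel[OF skewA_carrier] by blast
qed

definition period3 :: "real \<Rightarrow> real \<Rightarrow> nat \<Rightarrow> real" where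
  "period3 s t j = (if j mod 3 = 0 then 0 else if j mod 3 = 1 then s else t - s)"

lemma period3_sum3: "period3 s t j + period3 s t (j + 1) + period3 s t (j + 2) = t"
proof -
  have "j mod 3 = 0 \<and> (j + 1) mod 3 = 1 \<and> (j + 2) mod 3 = 2 \<or>
        j mod 3 = 1 \<and> (j + 1) mod 3 = 2 \<and> (j + 2) mod 3 = 0 \<or>
        j mod 3 = 2 \<and> (j + 1) mod 3 = 0 \<and> (j + 2) mod 3 = 1"
    by (auto simp: mod_Suc)
  then show ?thesis unfolding period3_def by auto
qed

lemma period3_linear: "period3 s t j = s * period3 1 0 j + t * period3 0 1 j"
  unfolding period3_def by simp

(* Candidate prefix sums with S 1 = s and S n = t: every solution of the row relations
   agrees with it below n, but at j = n it gives t only when n-k-1 = 1 (mod 3). *)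
definition skew_profile :: "nat \<Rightarrow> nat \<Rightarrow> real \<Rightarrow> real \<Rightarrow> nat \<Rightarrow> real" where
  "skew_profile n k s t j =
    (let a = n - k - 1 in
     if j \<le> a then period3 s t j
     else if j \<le> k + 1 then (if even (j - a) then period3 s t a else t - period3 s t a)
     else period3 s t (j - k - 1) + period3 s t (j - k))"

lemma skew_profile_head: "j \<le> n - k - 1 \<Longrightarrow> skew_profile n k s t j = period3 s t j"
  unfolding skew_profile_def by simp

lemma skew_profile_linear:
  "skew_profile n k s t j = s * skew_profile n k 1 0 j + t * skew_profile n k 0 1 j"
  unfolding skew_profile_def Let_def period3_linear[of s t]
  by (simp add: algebra_simps del: even_diff_nat)

locale skew_toeplitz_shape =
  fixes n k :: nat
  assumes even_n: "even n" and k_less_n: "k < n" and n_le: "n \<le> 2 * k + 2"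
begin

abbreviation gap :: nat where "gap \<equiv> n - k - 1"

lemma gap_le: "gap \<le> k + 1"
  using n_le by simp

lemma even_k_gap: "even (k + 1 - gap)"
  using even_n k_less_n n_le by presburger

end

locale prefix_recurrence = skew_toeplitz_shape +
  fixes S :: "nat \<Rightarrow> real"
  assumes S_0: "S 0 = 0"
    and row: "\<And>i. i < n \<Longrightarrow> S (min (i + k + 1) n) + S (i - k) = S i + S (i + 1)"

lemma (in skew_toeplitz_shape) prefix_recurrenceI:
  assumes S_0: "S 0 = 0"
    and head: "\<And>i. i < gap \<Longrightarrow> S (i + k + 1) = S i + S (i + 1)"
    and middle: "\<And>i. gap \<le> i \<Longrightarrow> i \<le> k \<Longrightarrow> S i + S (i + 1) = S n"
    and tail: "\<And>i. i < gap \<Longrightarrow> S n + S (i + 1) = S (i + k + 1) + S (i + k + 2)"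
  shows "prefix_recurrence n k S"
proof (rule prefix_recurrence.intro[OF skew_toeplitz_shape_axioms prefix_recurrence_axioms.intro])
  show "S 0 = 0" by (fact S_0)
next
  fix i assume "i < n"
  consider "i < gap" | "gap \<le> i" "i \<le> k" | "k < i" by linarith
  then show "S (min (i + k + 1) n) + S (i - k) = S i + S (i + 1)"
  proof cases
    case 1
    then show ?thesis using head[of i] gap_le S_0 by simp
  next
    case 2
    then have "min (i + k + 1) n = n" "i - k = 0" using k_less_n by auto
    then show ?thesis using middle[OF 2] S_0 by simp
  next
    case 3
    define j where "j = i - k - 1"
    have "i = j + k + 1" "j < gap" "min (i + k + 1) n = n" "i - k = j + 1"
      using 3 \<open>i < n\<close> n_le unfolding j_def by auto
    then show ?thesis using tail[of j] by simp
  qed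
qed

context prefix_recurrence
begin

lemma row_at:
  assumes "i < n" and "min (i + k + 1) n = p" and "i - k = q"
  shows "S p + S q = S i + S (i + 1)"
  using row[OF assms(1)] assms(2,3) by simp

lemma row_head:
  assumes "i < gap" shows "S (i + k + 1) = S i + S (i + 1)"
proof -
  have "S (i + k + 1) + S 0 = S i + S (i + 1)" by (rule row_at) (use assms gap_le in auto)
  then show ?thesis using S_0 by simp
qed

lemma row_middle:
  assumes "gap \<le> i" and "i \<le> k" shows "S i + S (i + 1) = S n"
proof -
  have "S n + S 0 = S i + S (i + 1)" by (rule row_at) (use assms k_less_n in auto)
  then show ?thesis using S_0 by simp
qed

lemma row_tail:
  assumes "i < gap" shows "S n + S (i + 1) = S (i + k + 1) + S (i + k + 2)"
proof -
  have "S n + S (i + 1) = S (i + k + 1) + S (i + k + 1 + 1)"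
    by (rule row_at) (use assms n_le in auto)
  then show ?thesis by simp
qed

lemma S_head: "j \<le> gap \<Longrightarrow> S j = period3 (S 1) (S n) j"
proof (induction j rule: less_induct)
  case (less j)
  consider "j = 0" | "j = 1" | i where "j = i + 2"
    by (metis One_nat_def add_2_eq_Suc' not0_implies_Suc)
  then show ?case
  proof cases
    case 3
    have "S i + S (i + 1) + S (i + 2) = S n"
      using row_tail[of i] row_head[of i] row_head[of "i + 1"] less.prems 3 by simp
    moreover have "S i = period3 (S 1) (S n) i" "S (i + 1) = period3 (S 1) (S n) (i + 1)"
      using less.prems 3 by (intro less.IH; simp)+
    ultimately show ?thesis using period3_sum3[of "S 1" "S n" i] 3 by simp
  qed (simp_all add: S_0 period3_def)
qed

lemma S_middle:
  "gap \<le> j \<Longrightarrow> j \<le> k + 1 \<Longrightarrow> S j = (if even (j - gap) then S gap else S n - S gap)"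
proof (induction j rule: dec_induct)
  case (step i)
  define d where "d = i - gap"
  have "S (Suc i) = S n - S i" using row_middle[of i] step by simp
  moreover have "S i = (if even d then S gap else S n - S gap)" using step unfolding d_def by simp
  moreover have "Suc i - gap = Suc d" using step unfolding d_def by simp
  ultimately show ?case by (cases "even d") simp_all
qed simp

lemma S_gap: assumes "1 \<le> gap" shows "S gap = S 1"
proof -
  have "S (k + 1) = S gap" using S_middle[of "k + 1"] even_k_gap gap_le by simp
  then show ?thesis using row_head[of 0] assms S_0 by simp
qed

lemma S_gap_pred: assumes "1 \<le> gap" shows "S (gap - 1) = 0"
proof -
  have "S (gap - 1 + k + 1) = S (gap - 1) + S (gap - 1 + 1)"
    by (rule row_head) (use assms in simp)
  moreover have "gap - 1 + k + 1 = n - 1" "gap - 1 + 1 = gap" using assms by auto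
  moreover have "S n + S gap = S (n - 1) + S (n - 1 + 1)"
    by (rule row_at) (use assms in auto)
  moreover have "n - 1 + 1 = n" using k_less_n by simp
  ultimately show ?thesis by simp
qed

lemma S_eq_profile: assumes "j < n" shows "S j = skew_profile n k (S 1) (S n) j"
proof -
  consider "j \<le> gap" | "gap < j" "j \<le> k + 1" | "k + 1 < j" by linarith
  then show ?thesis
  proof cases
    case 1
    then show ?thesis using S_head[OF 1] skew_profile_head[OF 1] by simp
  next
    case 2
    have "S j = (if even (j - gap) then S gap else S n - S gap)"
      using 2 by (intro S_middle) simp_all
    moreover have "S gap = period3 (S 1) (S n) gap" by (rule S_head) simp
    ultimately show ?thesis using 2 unfolding skew_profile_def Let_def by (simp del: even_diff_nat)
  next
    case 3
    define i where "i = j - k - 1"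
    have "j = i + k + 1" "j - k = i + 1" "i < gap" using 3 assms unfolding i_def by auto
    moreover have "S i = period3 (S 1) (S n) i" "S (i + 1) = period3 (S 1) (S n) (i + 1)"
      using \<open>i < gap\<close> by (intro S_head; simp)+
    ultimately show ?thesis using 3 row_head[of i] gap_le unfolding skew_profile_def by simp
  qed
qed

lemma boundary_values_vanish:
  assumes "gap mod 3 \<noteq> 1" shows "S 1 = 0 \<and> S n = 0"
proof (cases "gap = 0")
  case True
  have "S 1 = S n - S 0" using S_middle[of 1, unfolded True] by simp
  moreover have "S (k + 1) = S 0" using S_middle[of "k + 1", unfolded True] even_k_gap True by simp
  moreover have "k + 1 = n" using True k_less_n by simp
  ultimately show ?thesis using S_0 by simp
next
  case False
  then have "1 \<le> gap" by simp
  then have before_gap: "period3 (S 1) (S n) (gap - 1) = 0" and at_gap: "period3 (S 1) (S n) gap = S 1"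
    using S_gap_pred S_gap S_head[of "gap - 1"] S_head[of gap] by simp_all
  have "gap mod 3 = 0 \<and> (gap - 1) mod 3 = 2 \<or> gap mod 3 = 2 \<and> (gap - 1) mod 3 = 1"
    using assms \<open>1 \<le> gap\<close> by (cases gap) (auto simp: mod_Suc)
  then show ?thesis
  proof
    assume "gap mod 3 = 0 \<and> (gap - 1) mod 3 = 2"
    then show ?thesis using before_gap at_gap unfolding period3_def by simp
  next
    assume "gap mod 3 = 2 \<and> (gap - 1) mod 3 = 1"
    then show ?thesis using before_gap at_gap unfolding period3_def by simp
  qed
qed

end

context skew_toeplitz_shape
begin

lemma prefix_recurrence_prefix_sum:
  assumes "x \<in> mat_kernel (skewA n k)" shows "prefix_recurrence n k (prefix_sum x)"
  using assms unfolding mat_kernel_skewA_iff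
  by (intro prefix_recurrence.intro[OF skew_toeplitz_shape_axioms] prefix_recurrence_axioms.intro) auto

lemma difference_vec_mem_kernel:
  assumes "prefix_recurrence n k S"
  shows "difference_vec n S \<in> mat_kernel (skewA n k)"
proof -
  interpret prefix_recurrence n k S by (fact assms)
  have "difference_vec n S \<in> carrier_vec n" unfolding difference_vec_def by simp
  then show ?thesis unfolding mat_kernel_skewA_iff
    using row S_0 by (simp add: prefix_sum_difference_vec del: prefix_sum_Suc)
qed

lemma mat_kernel_skewA_trivial:
  assumes "gap mod 3 \<noteq> 1" shows "mat_kernel (skewA n k) \<subseteq> {0\<^sub>v n}"
proof
  fix x assume x: "x \<in> mat_kernel (skewA n k)"
  interpret prefix_recurrence n k "prefix_sum x"
    by (rule prefix_recurrence_prefix_sum[OF x])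
  have "prefix_sum x j = 0" if "j \<le> n" for j
  proof (cases "j = n")
    case False
    then show ?thesis using that S_eq_profile[of j] boundary_values_vanish[OF assms]
      skew_profile_linear[of n k 0 0 j] by simp
  qed (use boundary_values_vanish[OF assms] in simp)
  then have "x = 0\<^sub>v n"
    using x unfolding mat_kernel_skewA_iff by (intro vec_eq_by_prefix_sums) (auto simp: prefix_sum_zero_vec)
  then show "x \<in> {0\<^sub>v n}" by simp
qed

end

locale skew_toeplitz_singular = skew_toeplitz_shape +
  assumes gap_mod_3: "(n - k - 1) mod 3 = 1"
begin

lemma period3_gap: "period3 s t gap = s"
  using gap_mod_3 unfolding period3_def by simp

lemma profile_middle:
  assumes "gap \<le> j" and "j \<le> k + 1"
  shows "skew_profile n k s t j = (if even (j - gap) then s else t - s)"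
  using assms period3_gap unfolding skew_profile_def Let_def
  by (cases "j = gap") (simp_all del: even_diff_nat)

lemma profile_tail:
  assumes "k + 1 \<le> j"
  shows "skew_profile n k s t j = period3 s t (j - k - 1) + period3 s t (j - k)"
proof (cases "j = k + 1")
  case True
  then have "skew_profile n k s t j = s"
    using profile_middle[of j] gap_le even_k_gap by simp
  then show ?thesis using True unfolding period3_def by simp
qed (use assms gap_le in \<open>simp add: skew_profile_def\<close>)

lemma profile_1: "skew_profile n k s t 1 = s"
proof -
  have "1 \<le> gap" using gap_mod_3 by (cases gap) simp_all
  then show ?thesis unfolding skew_profile_def period3_def by simp
qed

lemma profile_n: "skew_profile n k s t n = t"
proof -
  have "(g + 1) mod 3 = 2" if "g mod 3 = 1" for g :: nat using that by presburger
  then have "(gap + 1) mod 3 = 2" using gap_mod_3 by blast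
  then have "period3 s t (gap + 1) = t - s" unfolding period3_def by simp
  moreover have "n - k - 1 = gap" "n - k = gap + 1" using k_less_n by simp_all
  ultimately show ?thesis using profile_tail[of n] k_less_n period3_gap by simp
qed

lemma prefix_recurrence_profile: "prefix_recurrence n k (skew_profile n k s t)"
proof (rule prefix_recurrenceI)
  show "skew_profile n k s t 0 = 0" using skew_profile_head[of 0] unfolding period3_def by simp
next
  fix i assume "i < gap"
  then show "skew_profile n k s t (i + k + 1) = skew_profile n k s t i + skew_profile n k s t (i + 1)"
    using profile_tail[of "i + k + 1"] skew_profile_head[of i] skew_profile_head[of "i + 1"] by simp
next
  fix i assume "gap \<le> i" "i \<le> k"
  then obtain d where "i = gap + d" using le_Suc_ex by blast
  then show "skew_profile n k s t i + skew_profile n k s t (i + 1) = skew_profile n k s t n"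
    using profile_middle[of i] profile_middle[of "i + 1"] profile_n \<open>i \<le> k\<close> by simp
next
  fix i assume "i < gap"
  then show "skew_profile n k s t n + skew_profile n k s t (i + 1) =
      skew_profile n k s t (i + k + 1) + skew_profile n k s t (i + k + 2)"
    using profile_tail[of "i + k + 1"] profile_tail[of "i + k + 2"] profile_n
      skew_profile_head[of "i + 1"] period3_sum3[of s t i] by simp
qed

abbreviation profile_vec :: "real \<Rightarrow> real \<Rightarrow> real vec" where
  "profile_vec s t \<equiv> difference_vec n (skew_profile n k s t)"

lemma profile_vec_mem_kernel: "profile_vec s t \<in> mat_kernel (skewA n k)"
  using difference_vec_mem_kernel prefix_recurrence_profile by simp

lemma prefix_sum_profile_vec_combination:
  assumes "j \<le> n"
  shows "prefix_sum (c \<cdot>\<^sub>v profile_vec 1 0 + d \<cdot>\<^sub>v profile_vec 0 1) j = skew_profile n k c d j"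
proof -
  have sums: "prefix_sum (profile_vec s t) j = skew_profile n k s t j" for s t
    by (rule prefix_sum_difference_vec[OF _ assms], rule prefix_recurrence.S_0[OF prefix_recurrence_profile])
  have carrier: "profile_vec s t \<in> carrier_vec n" for s t
    unfolding difference_vec_def by simp
  show ?thesis
    unfolding prefix_sum_lincomb[OF carrier carrier assms] sums skew_profile_linear[of n k c d j] ..
qed

lemma kernel_prefix_sum_eq_profile:
  assumes "x \<in> mat_kernel (skewA n k)" and "j \<le> n"
  shows "prefix_sum x j = skew_profile n k (prefix_sum x 1) (prefix_sum x n) j"
proof (cases "j = n")
  case False
  interpret prefix_recurrence n k "prefix_sum x"
    by (rule prefix_recurrence_prefix_sum[OF assms(1)])
  show ?thesis using False assms(2) S_eq_profile[of j] by simp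
qed (simp add: profile_n)

lemma kernel_dim_skewA: "kernel_dim (skewA n k) = 2"
proof (rule kernel_dim_eq_2[OF skewA_carrier profile_vec_mem_kernel profile_vec_mem_kernel])
  fix c d :: real assume zero: "c \<cdot>\<^sub>v profile_vec 1 0 + d \<cdot>\<^sub>v profile_vec 0 1 = 0\<^sub>v n"
  have "skew_profile n k c d j = 0" if "j \<le> n" for j
    using prefix_sum_profile_vec_combination[OF that, of c d] that
    unfolding zero by (simp add: prefix_sum_zero_vec)
  from this[of 1] this[of n] show "c = 0 \<and> d = 0"
    using k_less_n profile_1 profile_n by simp
next
  fix x assume x: "x \<in> mat_kernel (skewA n k)"
  have "x = prefix_sum x 1 \<cdot>\<^sub>v profile_vec 1 0 + prefix_sum x n \<cdot>\<^sub>v profile_vec 0 1"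
  proof (rule vec_eq_by_prefix_sums)
    fix j assume "j \<le> n"
    then show "prefix_sum x j = prefix_sum (prefix_sum x 1 \<cdot>\<^sub>v profile_vec 1 0 + prefix_sum x n \<cdot>\<^sub>v profile_vec 0 1) j"
      using kernel_prefix_sum_eq_profile[OF x \<open>j \<le> n\<close>]
        prefix_sum_profile_vec_combination[OF \<open>j \<le> n\<close>] by simp
  qed (use x in \<open>simp_all add: mat_kernel_skewA_iff difference_vec_def\<close>)
  then show "\<exists>c d. x = c \<cdot>\<^sub>v profile_vec 1 0 + d \<cdot>\<^sub>v profile_vec 0 1" by blast
qed

end

lemma (in skew_toeplitz_shape) nullityN_eq:
  "nullityN n k = (if gap mod 3 = 1 then 2 else 0)"
proof (cases "gap mod 3 = 1")
  case True
  then interpret skew_toeplitz_singular n k by unfold_locales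
  show ?thesis using True kernel_dim_skewA unfolding nullityN_def by simp
next
  case False
  then show ?thesis
    using kernel_dim_eq_0[OF skewA_carrier mat_kernel_skewA_trivial] unfolding nullityN_def by simp
qed

theorem lemma9p1:
  fixes \<nu> k :: nat
  assumes "2 * \<nu> - 1 \<ge> k" and "k \<ge> \<nu> - 1" and "\<nu> - 1 \<ge> 1"
  shows "nullityN (2 * \<nu>) k = (if k mod 3 = (2 * \<nu> + 1) mod 3 then 2 else 0)"
proof -
  interpret skew_toeplitz_shape "2 * \<nu>" k
    by unfold_locales (use assms in auto)
  have shift: "2 * \<nu> + 1 = k + (gap + 2)" using assms by arith
  have "(k + (g + 2)) mod 3 = k mod 3 \<longleftrightarrow> g mod 3 = 1" for g :: nat
    using mod_eq_dvd_iff_nat[of k "k + (g + 2)" 3] by (simp; presburger)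
  then have "k mod 3 = (2 * \<nu> + 1) mod 3 \<longleftrightarrow> gap mod 3 = 1" unfolding shift by metis
  then show ?thesis using nullityN_eq by simp
qed

end
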